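(* Consider Q-learning with on-policy learning policies as in the context with constant parameters $\alpha_k\equiv\alpha$, $\epsilon_k\equiv\epsilon$, $\tau_k\equiv\tau$, under the exploration assumption, with $\alpha<1/c_1$ where $c_1=\tfrac12\lambda^{r_b}\mu_{\pi_b,\min}\delta_b(1-\gamma)$ and $\lambda=\min_{0\le n\le k}\min_{s,a}\pi_n(a\mid s)$, $\epsilon\in(0,1]$ and $\tau\in(0,1/(1-\gamma)]$. Then for all $k\ge0$, \[ \mathbb E[\|Q^{\pi_k}-Q^*\|_\infty^2]\le\frac{12\gamma^2}{(1-\gamma)^2}\mathbb E[\|Q_k-Q^*\|_\infty^2]+\frac{12\epsilon^2}{(1-\gamma)^4}+\frac{3\tau^2\log^2(|\mathcal A|)}{(1-\gamma)^2}. \]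
   Context: MDP: finite state set $\mathcal S$, finite action set $\mathcal A$, transition kernel $p(s'\mid s,a)$, reward $\mathcal R$ with $|\mathcal R(s,a)|\le1$, discount $\gamma\in(0,1)$. For a policy $\pi$, $Q^\pi(s,a)=\mathbb E_\pi[\sum_{k\ge0}\gamma^k\mathcal R(S_k,A_k)\mid S_0=s,A_0=a]$ where $A_k\sim\pi(\cdot\mid S_k)$ for $k\ge1$. $Q^*$ is the optimal Q-function. $\|\cdot\|_\infty$ is the max norm. Algorithm: given $\alpha_k>0$, $\epsilon_k\in(0,1]$, $\tau_k>0$, initial $Q_0$ with $\|Q_0\|_\infty\le1/(1-\gamma)$ and state $S_0$, for $k=0,1,\dots$: $\pi_k(a\mid s)=\frac{\epsilon_k}{|\mathcal A|}+(1-\epsilon_k)\frac{\exp(Q_k(s,a)/\tau_k)}{\sum_{a'}\exp(Q_k(s,a')/\tau_k)}$; $A_k\sim\pi_k(\cdot\mid S_k)$, $S_{k+1}\sim p(\cdot\mid S_k,A_k)$; $Q_{k+1}(s,a)=Q_k(s,a)+\alpha_k\mathbb 1_{\{(S_k,A_k)=(s,a)\}}(\mathcal R(S_k,A_k)+\gamma\max_{a'}Q_k(S_{k+1},a')-Q_k(S_k,A_k))$. The policy $\pi_k$ is a (random) policy; $Q^{\pi_k}$ is its Q-function. Exploration assumption: there is a policy $\pi_b$ with $\pi_b(a\mid s)>0$ for all $(s,a)$ whose state chain $P_{\pi_b}(s,s')=\sum_a p(s'\mid s,a)\pi_b(a\mid s)$ is irreducible; $\mu_{\pi_b}$ its stationary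 distribution, $\mu_{\pi_b,\min}=\min_s\mu_{\pi_b}(s)$; $\mathcal P_{\pi_b}=(P_{\pi_b}+I)/2$; $r_b\in\mathbb Z_+$, $\delta_b>0$ satisfy $\min_{s,s'}\mathcal P_{\pi_b}^{r_b}(s,s')\ge\delta_b$. *)

theory Defs
  imports "HOL-Probability.Probability"
begin

text \<open>Finite MDP with states 's and actions 'a (both finite types).
  p s a s' is the transition kernel, R s a the reward, a (stationary Markov)
  policy is pol s a = pol(a | s).\<close>

definition is_policy :: "('s::finite \<Rightarrow> 'a::finite \<Rightarrow> real) \<Rightarrow> bool" where
  "is_policy pol \<longleftrightarrow> (\<forall>s a. 0 \<le> pol s a) \<and> (\<forall>s. (\<Sum>a\<in>UNIV. pol s a) = 1)"

definition is_kernel :: "('s::finite \<Rightarrow> 'a::finite \<Rightarrow> 's \<Rightarrow> real) \<Rightarrow> bool" where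
  "is_kernel p \<longleftrightarrow> (\<forall>s a s'. 0 \<le> p s a s') \<and> (\<forall>s a. (\<Sum>s'\<in>UNIV. p s a s') = 1)"

fun kpow :: "('b::finite \<Rightarrow> 'b \<Rightarrow> real) \<Rightarrow> nat \<Rightarrow> 'b \<Rightarrow> 'b \<Rightarrow> real" where
  "kpow P 0 x y = (if x = y then 1 else 0)"
| "kpow P (Suc n) x y = (\<Sum>z\<in>UNIV. kpow P n x z * P z y)"

definition sa_step :: "('s::finite \<Rightarrow> 'a::finite \<Rightarrow> 's \<Rightarrow> real) \<Rightarrow> ('s \<Rightarrow> 'a \<Rightarrow> real)
    \<Rightarrow> ('s \<times> 'a) \<Rightarrow> ('s \<times> 'a) \<Rightarrow> real" where
  "sa_step p pol x y = p (fst x) (snd x) (fst y) * pol (fst y) (snd y)"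

text \<open>Q^pol(s,a) = E_pi[ sum_k gamma^k R(S_k,A_k) | S_0 = s, A_0 = a ], written out
  with the k-step distribution of the state-action chain.\<close>
definition Qfun :: "('s::finite \<Rightarrow> 'a::finite \<Rightarrow> 's \<Rightarrow> real) \<Rightarrow> ('s \<Rightarrow> 'a \<Rightarrow> real) \<Rightarrow> real
    \<Rightarrow> ('s \<Rightarrow> 'a \<Rightarrow> real) \<Rightarrow> 's \<Rightarrow> 'a \<Rightarrow> real" where
  "Qfun p R \<gamma> pol s a =
     (\<Sum>k. \<gamma> ^ k * (\<Sum>y\<in>UNIV. kpow (sa_step p pol) k (s, a) y * R (fst y) (snd y)))"

definition Qstar :: "('s::finite \<Rightarrow> 'a::finite \<Rightarrow> 's \<Rightarrow> real) \<Rightarrow> ('s \<Rightarrow> 'a \<Rightarrow> real) \<Rightarrow> real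
    \<Rightarrow> 's \<Rightarrow> 'a \<Rightarrow> real" where
  "Qstar p R \<gamma> s a = (SUP pol\<in>{pol. is_policy pol}. Qfun p R \<gamma> pol s a)"

definition supnorm :: "('s::finite \<Rightarrow> 'a::finite \<Rightarrow> real) \<Rightarrow> real" where
  "supnorm f = Max (range (\<lambda>(s, a). \<bar>f s a\<bar>))"

definition softpol :: "real \<Rightarrow> real \<Rightarrow> ('s::finite \<Rightarrow> 'a::finite \<Rightarrow> real) \<Rightarrow> 's \<Rightarrow> 'a \<Rightarrow> real" where
  "softpol \<epsilon> \<tau> Q s a = \<epsilon> / real CARD('a)
     + (1 - \<epsilon>) * exp (Q s a / \<tau>) / (\<Sum>a'\<in>UNIV. exp (Q s a' / \<tau>))"

definition qupdate :: "real \<Rightarrow> ('s::finite \<Rightarrow> 'a::finite \<Rightarrow> real) \<Rightarrow> real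
    \<Rightarrow> ('s \<Rightarrow> 'a \<Rightarrow> real) \<Rightarrow> 's \<Rightarrow> 'a \<Rightarrow> 's \<Rightarrow> ('s \<Rightarrow> 'a \<Rightarrow> real)" where
  "qupdate \<alpha> R \<gamma> Q s a s' = (\<lambda>x y. if (x, y) = (s, a)
      then Q x y + \<alpha> * (R s a + \<gamma> * Max (range (Q s')) - Q s a) else Q x y)"

definition Pstate :: "('s::finite \<Rightarrow> 'a::finite \<Rightarrow> 's \<Rightarrow> real) \<Rightarrow> ('s \<Rightarrow> 'a \<Rightarrow> real) \<Rightarrow> 's \<Rightarrow> 's \<Rightarrow> real" where
  "Pstate p pol s s' = (\<Sum>a\<in>UNIV. p s a s' * pol s a)"

definition histS :: "(nat \<Rightarrow> 'w \<Rightarrow> 's) \<Rightarrow> (nat \<Rightarrow> 'w \<Rightarrow> 'a) \<Rightarrow> nat \<Rightarrow> 'w \<Rightarrow> ('s \<times> 'a) list \<times> 's" where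
  "histS S A n w = (map (\<lambda>i. (S i w, A i w)) [0..<n], S n w)"

definition histA :: "(nat \<Rightarrow> 'w \<Rightarrow> 's) \<Rightarrow> (nat \<Rightarrow> 'w \<Rightarrow> 'a) \<Rightarrow> nat \<Rightarrow> 'w \<Rightarrow> ('s \<times> 'a) list" where
  "histA S A n w = map (\<lambda>i. (S i w, A i w)) [0..<Suc n]"

end

theory Submission
  imports Defs
begin

text \<open>For a policy \<open>\<pi>\<close>, comparing the Bellman equation of \<open>Q\<^sup>\<pi>\<close> with that of an arbitrary
  policy gives \<open>\<parallel>Q\<^sup>\<pi> - Q\<^sup>*\<parallel> \<le> \<gamma>/(1-\<gamma>) max\<^sub>s (max\<^sub>a Q\<^sup>*(s,a) - \<Sum>\<^sub>a \<pi>(a|s) Q\<^sup>*(s,a))\<close>.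
  For the \<open>\<epsilon>\<close>-softmax policy of \<open>Q\<^sub>k\<close> this suboptimality is at most \<open>2\<epsilon>/(1-\<gamma>)\<close> for the
  uniform part, plus \<open>2\<parallel>Q\<^sub>k - Q\<^sup>*\<parallel>\<close> for acting on \<open>Q\<^sub>k\<close> instead of \<open>Q\<^sup>*\<close>, plus \<open>\<tau> ln |A|\<close>
  because the softmax of \<open>Q\<^sub>k\<close> loses at most \<open>\<tau>\<close> times its entropy. Squaring with
  \<open>(a+b+c)\<^sup>2 \<le> 3(a\<^sup>2+b\<^sup>2+c\<^sup>2)\<close> gives the bound; taking expectations only needs \<open>Q\<^sub>k\<close> to be
  bounded and measurable, which follows by induction on \<open>k\<close>.\<close>

lemma kpow_nonneg:
  assumes "\<And>x y. 0 \<le> P x y"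
  shows "0 \<le> kpow P n x y"
  using assms by (induction n arbitrary: y) (auto intro!: sum_nonneg)

lemma kpow_row_sum:
  assumes "\<And>x. (\<Sum>y\<in>UNIV. P x y) = 1"
  shows "(\<Sum>y\<in>UNIV. kpow P n x y) = 1"
proof (induction n)
  case 0
  show ?case by (simp add: if_distrib[of "\<lambda>c. c * _"] cong: if_cong)
next
  case (Suc n)
  have "(\<Sum>y\<in>UNIV. kpow P (Suc n) x y) = (\<Sum>y\<in>UNIV. \<Sum>z\<in>UNIV. kpow P n x z * P z y)"
    by simp
  also have "\<dots> = (\<Sum>z\<in>UNIV. kpow P n x z * (\<Sum>y\<in>UNIV. P z y))"
    by (subst sum.swap) (simp add: sum_distrib_left)
  finally show ?case using assms Suc by simp
qed

lemma kpow_Suc_left: "kpow P (Suc n) x y = (\<Sum>z\<in>UNIV. P x z * kpow P n z y)"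
proof (induction n arbitrary: y)
  case 0
  show ?case by (simp add: if_distrib[of "\<lambda>c. c * _"] if_distrib[of "\<lambda>c. _ * c"] cong: if_cong)
next
  case (Suc n)
  have "kpow P (Suc (Suc n)) x y = (\<Sum>w\<in>UNIV. \<Sum>z\<in>UNIV. P x z * kpow P n z w * P w y)"
    using Suc by (simp add: sum_distrib_right)
  also have "\<dots> = (\<Sum>z\<in>UNIV. P x z * kpow P (Suc n) z y)"
    by (subst sum.swap) (simp add: sum_distrib_left mult.assoc)
  finally show ?case .
qed

lemma sum_sa_step:
  "(\<Sum>z\<in>UNIV. sa_step p pol x z * q (fst z) (snd z))
    = (\<Sum>s'\<in>UNIV. p (fst x) (snd x) s' * (\<Sum>a'\<in>UNIV. pol s' a' * q s' a'))"
  unfolding sa_step_def sum_distrib_left UNIV_Times_UNIV[symmetric] sum.cartesian_product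
  by (simp add: case_prod_beta mult_ac)

lemma supnorm_ge: "\<bar>f s a\<bar> \<le> supnorm f"
  unfolding supnorm_def by (rule Max_ge) auto

lemma supnorm_le: "(\<And>s a. \<bar>f s a\<bar> \<le> c) \<Longrightarrow> supnorm f \<le> c"
  unfolding supnorm_def by (subst Max_le_iff) auto

lemma supnorm_nonneg: "0 \<le> supnorm f"
  using supnorm_ge[of f] abs_ge_zero order_trans by blast

lemma supnorm_diff_le: "supnorm (\<lambda>s a. f s a - g s a) \<le> supnorm f + supnorm g"
proof (rule supnorm_le)
  fix s a
  show "\<bar>f s a - g s a\<bar> \<le> supnorm f + supnorm g"
    using abs_triangle_ineq4[of "f s a" "g s a"] supnorm_ge[of f s a] supnorm_ge[of g s a] by linarith
qed

lemma borel_measurable_supnorm: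
  assumes "\<And>s a. (\<lambda>w. F w s a) \<in> borel_measurable M"
  shows "(\<lambda>w. supnorm (F w)) \<in> borel_measurable M"
proof -
  have "(\<lambda>w. Max ((\<lambda>i. \<bar>F w (fst i) (snd i)\<bar>) ` UNIV)) \<in> borel_measurable M"
    using assms by (intro borel_measurable_Max) auto
  then show ?thesis by (simp add: supnorm_def split_beta')
qed

lemma (in finite_measure) integrable_supnorm_sq:
  assumes "\<And>s a. (\<lambda>w. F w s a) \<in> borel_measurable M"
    and "\<And>w. w \<in> space M \<Longrightarrow> supnorm (F w) \<le> B"
  shows "integrable M (\<lambda>w. (supnorm (F w))\<^sup>2)"
proof (rule integrable_const_bound[where B="B\<^sup>2"])
  show "AE w in M. norm ((supnorm (F w))\<^sup>2) \<le> B\<^sup>2"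
    using assms(2) by (intro AE_I2) (simp add: power_mono supnorm_nonneg)
  show "(\<lambda>w. (supnorm (F w))\<^sup>2) \<in> borel_measurable M"
    using assms(1) by (intro borel_measurable_power borel_measurable_supnorm)
qed

lemma Max_range_ge: "q a \<le> Max (range (q :: 'a::finite \<Rightarrow> real))"
  by (rule Max_ge) auto

lemma Max_range_attained: "\<exists>a. Max (range (q :: 'a::finite \<Rightarrow> real)) = q a"
proof -
  have "Max (range q) \<in> range q" by (rule Max_in) auto
  then show ?thesis by (metis rangeE)
qed

lemma weighted_sum_le_Max_range:
  fixes q :: "'a::finite \<Rightarrow> real"
  assumes "\<And>a. 0 \<le> w a" "(\<Sum>a\<in>UNIV. w a) = 1"
  shows "(\<Sum>a\<in>UNIV. w a * q a) \<le> Max (range q)"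
proof -
  have "(\<Sum>a\<in>UNIV. w a * q a) \<le> (\<Sum>a\<in>UNIV. w a * Max (range q))"
    by (intro sum_mono mult_left_mono Max_range_ge) (rule assms(1))
  also have "\<dots> = Max (range q)"
    using assms(2) by (simp add: sum_distrib_right[symmetric])
  finally show ?thesis .
qed

lemma Max_sub_mean_le:
  fixes q :: "'a::finite \<Rightarrow> real"
  assumes K: "\<And>a. \<bar>q a\<bar> \<le> K"
  shows "Max (range q) - (\<Sum>a\<in>UNIV. q a) / real CARD('a) \<le> 2 * K"
proof -
  obtain a1 where "Max (range q) = q a1" using Max_range_attained by blast
  then have upper: "Max (range q) \<le> K" using K[of a1] by simp
  have "- K \<le> q a" for a
    using K[of a] by linarith
  then have "real CARD('a) * (- K) \<le> (\<Sum>a\<in>UNIV. q a)"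
    using sum_bounded_below[of UNIV "- K" q] by simp
  then have "- K \<le> (\<Sum>a\<in>UNIV. q a) / real CARD('a)"
    by (simp add: le_divide_eq mult.commute)
  with upper show ?thesis by linarith
qed

lemma Max_sub_weighted_sum_perturb_le:
  fixes q q' w :: "'a::finite \<Rightarrow> real"
  assumes w: "\<And>a. 0 \<le> w a" "(\<Sum>a\<in>UNIV. w a) = 1" and E: "\<And>a. \<bar>q a - q' a\<bar> \<le> E"
  shows "Max (range q') - (\<Sum>a\<in>UNIV. w a * q' a) \<le> Max (range q) - (\<Sum>a\<in>UNIV. w a * q a) + 2 * E"
proof -
  obtain a1 where "Max (range q') = q' a1" using Max_range_attained by blast
  moreover have "q' a1 \<le> q a1 + E"
    using E[of a1] by (simp add: abs_le_iff)
  ultimately have Max_le: "Max (range q') \<le> Max (range q) + E"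
    using Max_range_ge[of q a1] by linarith
  have "(\<Sum>a\<in>UNIV. w a * (q a - q' a)) \<le> (\<Sum>a\<in>UNIV. w a * E)"
    using w E by (intro sum_mono mult_left_mono) (auto simp: abs_le_iff)
  then have "(\<Sum>a\<in>UNIV. w a * q a) - (\<Sum>a\<in>UNIV. w a * q' a) \<le> E"
    using w(2) by (simp add: right_diff_distrib sum_subtractf sum_distrib_right[symmetric])
  with Max_le show ?thesis by linarith
qed

lemma entropy_le_ln_card:
  fixes \<sigma> :: "'a::finite \<Rightarrow> real"
  assumes pos: "\<And>a. 0 < \<sigma> a" and sum: "(\<Sum>a\<in>UNIV. \<sigma> a) = 1"
  shows "- (\<Sum>a\<in>UNIV. \<sigma> a * ln (\<sigma> a)) \<le> ln (real CARD('a))"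
proof -
  define n where "n = real CARD('a)"
  have "(\<Sum>a\<in>UNIV. \<sigma> a * ln (1 / (n * \<sigma> a))) = (\<Sum>a\<in>UNIV. - (\<sigma> a * ln (\<sigma> a)) - ln n * \<sigma> a)"
    using pos by (intro sum.cong refl) (simp add: n_def ln_div ln_mult algebra_simps)
  then have "- (\<Sum>a\<in>UNIV. \<sigma> a * ln (\<sigma> a)) - ln n = (\<Sum>a\<in>UNIV. \<sigma> a * ln (1 / (n * \<sigma> a)))"
    using sum by (simp add: sum_subtractf sum_negf flip: sum_distrib_left)
  also have "\<dots> \<le> (\<Sum>a\<in>UNIV. \<sigma> a * (1 / (n * \<sigma> a) - 1))"
    using pos by (intro sum_mono mult_left_mono ln_le_minus_one) (auto simp: n_def less_imp_le)
  also have "\<dots> = (\<Sum>a\<in>UNIV. 1 / n - \<sigma> a)"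
    using pos by (intro sum.cong refl) (simp add: n_def field_simps less_imp_neq[symmetric])
  also have "\<dots> = 0"
    using sum by (simp add: n_def sum_subtractf)
  finally show ?thesis by (simp add: n_def)
qed

text \<open>The softmax weights \<open>\<sigma>\<close> satisfy \<open>f = \<tau> ln \<sigma> + \<tau> ln Z\<close>, so their average of \<open>f\<close> is
  \<open>\<tau> ln Z\<close> minus \<open>\<tau>\<close> times their entropy, and \<open>\<tau> ln Z \<ge> max f\<close>.\<close>
lemma Max_sub_softmax_avg_le:
  fixes f :: "'a::finite \<Rightarrow> real"
  assumes tau: "0 < \<tau>"
  shows "Max (range f) - (\<Sum>a\<in>UNIV. exp (f a / \<tau>) / (\<Sum>a'\<in>UNIV. exp (f a' / \<tau>)) * f a)
           \<le> \<tau> * ln (real CARD('a))"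
proof -
  define Z where "Z = (\<Sum>a'\<in>UNIV. exp (f a' / \<tau>))"
  define \<sigma> where "\<sigma> a = exp (f a / \<tau>) / Z" for a
  have Z_pos: "0 < Z" unfolding Z_def by (intro sum_pos) auto
  have \<sigma>_pos: "0 < \<sigma> a" for a unfolding \<sigma>_def using Z_pos by simp
  have \<sigma>_sum: "(\<Sum>a\<in>UNIV. \<sigma> a) = 1"
    unfolding \<sigma>_def using Z_pos by (simp add: Z_def flip: sum_divide_distrib)
  have f_eq: "f a = \<tau> * ln (\<sigma> a) + \<tau> * ln Z" for a
    unfolding \<sigma>_def using Z_pos tau by (simp add: ln_div field_simps)
  obtain a0 where a0: "Max (range f) = f a0" using Max_range_attained by blast
  have "exp (f a0 / \<tau>) \<le> Z" unfolding Z_def by (rule member_le_sum) auto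
  then have "f a0 / \<tau> \<le> ln Z"
    using Z_pos by (simp add: ln_ge_iff)
  then have "Max (range f) \<le> \<tau> * ln Z"
    using a0 tau by (simp add: pos_divide_le_eq mult.commute)
  moreover have "(\<Sum>a\<in>UNIV. \<sigma> a * f a) = \<tau> * (\<Sum>a\<in>UNIV. \<sigma> a * ln (\<sigma> a)) + \<tau> * ln Z"
  proof -
    have "(\<Sum>a\<in>UNIV. \<sigma> a * f a) = (\<Sum>a\<in>UNIV. \<tau> * (\<sigma> a * ln (\<sigma> a)) + \<tau> * ln Z * \<sigma> a)"
      by (intro sum.cong refl) (simp add: f_eq algebra_simps)
    then show ?thesis
      using \<sigma>_sum by (simp add: sum.distrib flip: sum_distrib_left)
  qed
  moreover have "- (\<tau> * (\<Sum>a\<in>UNIV. \<sigma> a * ln (\<sigma> a))) \<le> \<tau> * ln (real CARD('a))"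
    using mult_left_mono[OF entropy_le_ln_card[OF \<sigma>_pos \<sigma>_sum], of \<tau>] tau by simp
  ultimately have "Max (range f) - (\<Sum>a\<in>UNIV. \<sigma> a * f a) \<le> \<tau> * ln (real CARD('a))"
    by linarith
  then show ?thesis by (simp add: \<sigma>_def Z_def)
qed

lemma uniform_is_policy: "is_policy (\<lambda>(s::'s::finite) (a::'a::finite). 1 / real CARD('a))"
  unfolding is_policy_def by auto

lemma softpol_is_policy:
  assumes "0 \<le> \<epsilon>" "\<epsilon> \<le> 1"
  shows "is_policy (softpol \<epsilon> \<tau> (Q :: 's::finite \<Rightarrow> 'a::finite \<Rightarrow> real))"
  unfolding is_policy_def
proof (intro conjI allI)
  fix s a
  have "0 < (\<Sum>a'\<in>UNIV. exp (Q s a' / \<tau>))" by (intro sum_pos) auto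
  then show "0 \<le> softpol \<epsilon> \<tau> Q s a"
    unfolding softpol_def using assms by (intro add_nonneg_nonneg) auto
next
  fix s
  have "0 < (\<Sum>a'\<in>UNIV. exp (Q s a' / \<tau>))" by (intro sum_pos) auto
  then show "(\<Sum>a\<in>UNIV. softpol \<epsilon> \<tau> Q s a) = 1"
    unfolding softpol_def
    by (simp add: sum.distrib sum_distrib_left[symmetric] sum_divide_distrib[symmetric])
qed

lemma Max_sub_softpol_avg_le:
  fixes Q Q' :: "'s::finite \<Rightarrow> 'a::finite \<Rightarrow> real"
  assumes K: "\<And>s a. \<bar>Q' s a\<bar> \<le> K" and eps: "0 \<le> \<epsilon>" "\<epsilon> \<le> 1" and tau: "0 < \<tau>"
  shows "Max (range (Q' s)) - (\<Sum>a\<in>UNIV. softpol \<epsilon> \<tau> Q s a * Q' s a)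
    \<le> 2 * \<epsilon> * K + 2 * supnorm (\<lambda>s a. Q s a - Q' s a) + \<tau> * ln (real CARD('a))"
proof -
  define E where "E = supnorm (\<lambda>s a. Q s a - Q' s a)"
  define L where "L = \<tau> * ln (real CARD('a))"
  define Z where "Z = (\<Sum>a'\<in>UNIV. exp (Q s a' / \<tau>))"
  define \<sigma> where "\<sigma> a = exp (Q s a / \<tau>) / Z" for a
  have Z_pos: "0 < Z" unfolding Z_def by (intro sum_pos) auto
  have \<sigma>: "0 \<le> \<sigma> a" "(\<Sum>a\<in>UNIV. \<sigma> a) = 1" for a
    unfolding \<sigma>_def using Z_pos by (auto simp: Z_def sum_divide_distrib[symmetric])
  have nonneg: "0 \<le> E" "0 \<le> L"
    using supnorm_nonneg tau by (auto simp: E_def L_def)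
  have uniform: "Max (range (Q' s)) - (\<Sum>a\<in>UNIV. Q' s a) / real CARD('a) \<le> 2 * K"
    by (rule Max_sub_mean_le) (rule K)
  have "Max (range (Q' s)) - (\<Sum>a\<in>UNIV. \<sigma> a * Q' s a)
      \<le> Max (range (Q s)) - (\<Sum>a\<in>UNIV. \<sigma> a * Q s a) + 2 * E"
    using supnorm_ge[of "\<lambda>s a. Q s a - Q' s a" s]
    by (intro Max_sub_weighted_sum_perturb_le \<sigma>) (simp add: E_def)
  also have "\<dots> \<le> L + 2 * E"
    using Max_sub_softmax_avg_le[OF tau, of "Q s"] by (simp add: \<sigma>_def Z_def L_def)
  finally have softmax: "Max (range (Q' s)) - (\<Sum>a\<in>UNIV. \<sigma> a * Q' s a) \<le> 2 * E + L" by simp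
  have "(\<Sum>a\<in>UNIV. softpol \<epsilon> \<tau> Q s a * Q' s a)
      = (\<Sum>a\<in>UNIV. \<epsilon> / real CARD('a) * Q' s a + (1 - \<epsilon>) * (\<sigma> a * Q' s a))"
    by (intro sum.cong refl) (simp add: softpol_def \<sigma>_def Z_def algebra_simps)
  also have "\<dots> = \<epsilon> * ((\<Sum>a\<in>UNIV. Q' s a) / real CARD('a)) + (1 - \<epsilon>) * (\<Sum>a\<in>UNIV. \<sigma> a * Q' s a)"
    by (simp add: sum.distrib sum_divide_distrib[symmetric] flip: sum_distrib_left)
  finally have "Max (range (Q' s)) - (\<Sum>a\<in>UNIV. softpol \<epsilon> \<tau> Q s a * Q' s a)
      = \<epsilon> * (Max (range (Q' s)) - (\<Sum>a\<in>UNIV. Q' s a) / real CARD('a))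
        + (1 - \<epsilon>) * (Max (range (Q' s)) - (\<Sum>a\<in>UNIV. \<sigma> a * Q' s a))"
    by (simp add: algebra_simps)
  also have "\<dots> \<le> \<epsilon> * (2 * K) + (1 - \<epsilon>) * (2 * E + L)"
    using eps uniform softmax by (intro add_mono mult_left_mono) auto
  also have "\<dots> \<le> 2 * \<epsilon> * K + 2 * E + L"
    using eps nonneg by (simp add: algebra_simps)
  finally show ?thesis by (simp add: E_def L_def)
qed

lemma power2_sum3_le:
  fixes a b c :: real
  shows "(a + b + c)\<^sup>2 \<le> 3 * (a\<^sup>2 + b\<^sup>2 + c\<^sup>2)"
proof -
  have "0 \<le> (a - b)\<^sup>2 + (b - c)\<^sup>2 + (a - c)\<^sup>2" by simp
  then show ?thesis by (simp add: power2_eq_square algebra_simps)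
qed

locale discounted_mdp =
  fixes p :: "'s::finite \<Rightarrow> 'a::finite \<Rightarrow> 's \<Rightarrow> real"
    and R :: "'s \<Rightarrow> 'a \<Rightarrow> real" and \<gamma> :: real
  assumes kernel: "is_kernel p"
    and reward_bound: "\<And>s a. \<bar>R s a\<bar> \<le> 1"
    and discount: "0 \<le> \<gamma>" "\<gamma> < 1"
begin

lemma sa_step_nonneg: "is_policy pol \<Longrightarrow> 0 \<le> sa_step p pol x y"
  using kernel by (simp add: is_kernel_def is_policy_def sa_step_def)

lemma sa_step_row_sum: "is_policy pol \<Longrightarrow> (\<Sum>y\<in>UNIV. sa_step p pol x y) = 1"
  using sum_sa_step[of p pol x "\<lambda>_ _. 1"] kernel by (simp add: is_policy_def is_kernel_def)

lemma abs_expected_reward_le: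
  assumes "is_policy pol"
  shows "\<bar>\<Sum>y\<in>UNIV. kpow (sa_step p pol) n x y * R (fst y) (snd y)\<bar> \<le> 1"
proof -
  have nonneg: "0 \<le> kpow (sa_step p pol) n x y" for y
    by (intro kpow_nonneg sa_step_nonneg assms)
  have "\<bar>\<Sum>y\<in>UNIV. kpow (sa_step p pol) n x y * R (fst y) (snd y)\<bar>
     \<le> (\<Sum>y\<in>UNIV. kpow (sa_step p pol) n x y)"
    by (rule order_trans[OF sum_abs sum_mono])
      (use nonneg reward_bound in \<open>simp add: abs_mult mult_left_le\<close>)
  also have "\<dots> = 1"
    by (intro kpow_row_sum sa_step_row_sum assms)
  finally show ?thesis .
qed

lemma abs_discounted_reward_le:
  "is_policy pol \<Longrightarrow>
    \<bar>\<gamma> ^ n * (\<Sum>y\<in>UNIV. kpow (sa_step p pol) n x y * R (fst y) (snd y))\<bar> \<le> \<gamma> ^ n"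
  using abs_expected_reward_le[of pol n x] discount
  by (simp add: abs_mult mult_left_le)

lemma summable_discounted_reward:
  "is_policy pol \<Longrightarrow>
    summable (\<lambda>n. \<gamma> ^ n * (\<Sum>y\<in>UNIV. kpow (sa_step p pol) n x y * R (fst y) (snd y)))"
  by (rule summable_comparison_test'[where g="\<lambda>n. \<gamma> ^ n"])
    (use abs_discounted_reward_le discount in auto)

lemma abs_Qfun_le:
  assumes "is_policy pol"
  shows "\<bar>Qfun p R \<gamma> pol s a\<bar> \<le> 1 / (1 - \<gamma>)"
proof -
  have "norm (Qfun p R \<gamma> pol s a) \<le> (\<Sum>n. \<gamma> ^ n)"
    unfolding Qfun_def
    by (rule norm_suminf_le) (use abs_discounted_reward_le[OF assms] discount in auto)
  then show ?thesis using discount by (simp add: suminf_geometric)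
qed

lemma Qfun_bellman:
  assumes pol: "is_policy pol"
  shows "Qfun p R \<gamma> pol s a
    = R s a + \<gamma> * (\<Sum>s'\<in>UNIV. p s a s' * (\<Sum>a'\<in>UNIV. pol s' a' * Qfun p R \<gamma> pol s' a'))"
proof -
  define P where "P = sa_step p pol"
  define r where "r x n = \<gamma> ^ n * (\<Sum>y\<in>UNIV. kpow P n x y * R (fst y) (snd y))" for x n
  have summable: "summable (r x)" for x
    unfolding r_def P_def by (rule summable_discounted_reward[OF pol])
  have r_0: "r x 0 = R (fst x) (snd x)" for x
    unfolding r_def by (simp add: if_distrib[of "\<lambda>c. c * _"] cong: if_cong)
  have r_Suc: "r x (Suc n) = \<gamma> * (\<Sum>z\<in>UNIV. P x z * r z n)" for x n
  proof -
    have "r x (Suc n) = \<gamma> * \<gamma> ^ n * (\<Sum>y\<in>UNIV. \<Sum>z\<in>UNIV. P x z * kpow P n z y * R (fst y) (snd y))"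
      unfolding r_def kpow_Suc_left by (simp add: sum_distrib_right)
    also have "\<dots> = \<gamma> * \<gamma> ^ n * (\<Sum>z\<in>UNIV. \<Sum>y\<in>UNIV. P x z * kpow P n z y * R (fst y) (snd y))"
      by (subst sum.swap) (rule refl)
    finally show ?thesis
      unfolding r_def by (simp add: sum_distrib_left mult_ac)
  qed
  have "suminf (r (s, a)) = r (s, a) 0 + (\<Sum>n. \<gamma> * (\<Sum>z\<in>UNIV. P (s, a) z * r z n))"
    using suminf_split_head[OF summable] by (simp add: r_Suc)
  also have "(\<Sum>n. \<gamma> * (\<Sum>z\<in>UNIV. P (s, a) z * r z n)) = \<gamma> * (\<Sum>z\<in>UNIV. P (s, a) z * suminf (r z))"
    by (simp add: suminf_mult summable_sum summable_mult summable suminf_sum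
        flip: suminf_mult[OF summable_mult[OF summable]])
  finally have "suminf (r (s, a)) = R s a + \<gamma> * (\<Sum>z\<in>UNIV. P (s, a) z * suminf (r z))"
    by (simp add: r_0)
  moreover have "Qfun p R \<gamma> pol s a = suminf (r (s, a))" for s a
    unfolding Qfun_def r_def P_def ..
  ultimately show ?thesis
    unfolding P_def using sum_sa_step[of p pol "(s, a)" "Qfun p R \<gamma> pol"] by simp
qed

lemma bdd_above_Qfun: "bdd_above ((\<lambda>pol. Qfun p R \<gamma> pol s a) ` {pol. is_policy pol})"
  using abs_Qfun_le by (intro bdd_aboveI2[where M="1 / (1 - \<gamma>)"]) (auto simp: abs_le_iff)

lemma Qfun_le_Qstar: "is_policy pol \<Longrightarrow> Qfun p R \<gamma> pol s a \<le> Qstar p R \<gamma> s a"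
  unfolding Qstar_def by (rule cSUP_upper[OF _ bdd_above_Qfun]) auto

lemma Qstar_le: "(\<And>pol. is_policy pol \<Longrightarrow> Qfun p R \<gamma> pol s a \<le> c) \<Longrightarrow> Qstar p R \<gamma> s a \<le> c"
  unfolding Qstar_def using uniform_is_policy by (intro cSUP_least) auto

lemma abs_Qstar_le: "\<bar>Qstar p R \<gamma> s a\<bar> \<le> 1 / (1 - \<gamma>)"
proof -
  have "Qstar p R \<gamma> s a \<le> 1 / (1 - \<gamma>)"
    using abs_Qfun_le by (intro Qstar_le) (simp add: abs_le_iff)
  moreover have "- (1 / (1 - \<gamma>)) \<le> Qfun p R \<gamma> (\<lambda>s a. 1 / real CARD('a)) s a"
    using abs_Qfun_le[OF uniform_is_policy, of s a] by (simp add: abs_le_iff)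
  ultimately show ?thesis
    using Qfun_le_Qstar[OF uniform_is_policy, of s a] by (simp add: abs_le_iff)
qed

lemma supnorm_Qstar_le: "supnorm (Qstar p R \<gamma>) \<le> 1 / (1 - \<gamma>)"
  by (intro supnorm_le abs_Qstar_le)

text \<open>Any policy's gain over \<open>\<pi>\<close> after one step is at most \<open>C + \<parallel>Q\<^sup>\<pi> - Q\<^sup>*\<parallel>\<close>, so
  \<open>\<parallel>Q\<^sup>\<pi> - Q\<^sup>*\<parallel> \<le> \<gamma> (C + \<parallel>Q\<^sup>\<pi> - Q\<^sup>*\<parallel>)\<close>.\<close>
lemma supnorm_Qfun_sub_Qstar_le:
  assumes pol: "is_policy \<pi>"
    and C: "\<And>s. Max (range (Qstar p R \<gamma> s)) - (\<Sum>a\<in>UNIV. \<pi> s a * Qstar p R \<gamma> s a) \<le> C"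
  shows "supnorm (\<lambda>s a. Qfun p R \<gamma> \<pi> s a - Qstar p R \<gamma> s a) \<le> \<gamma> * C / (1 - \<gamma>)"
proof -
  define D where "D = supnorm (\<lambda>s a. Qfun p R \<gamma> \<pi> s a - Qstar p R \<gamma> s a)"
  have D: "Qstar p R \<gamma> s a - D \<le> Qfun p R \<gamma> \<pi> s a" for s a
    using supnorm_ge[of "\<lambda>s a. Qfun p R \<gamma> \<pi> s a - Qstar p R \<gamma> s a" s a]
    unfolding D_def by linarith
  have one_step_gain: "(\<Sum>a'\<in>UNIV. pol s' a' * Qfun p R \<gamma> pol s' a')
      - (\<Sum>a'\<in>UNIV. \<pi> s' a' * Qfun p R \<gamma> \<pi> s' a') \<le> C + D"
    if pol': "is_policy pol" for pol :: "'s \<Rightarrow> 'a \<Rightarrow> real" and s'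
  proof -
    have "(\<Sum>a'\<in>UNIV. pol s' a' * Qfun p R \<gamma> pol s' a') \<le> (\<Sum>a'\<in>UNIV. pol s' a' * Qstar p R \<gamma> s' a')"
      using pol' by (intro sum_mono mult_left_mono Qfun_le_Qstar) (auto simp: is_policy_def)
    also have "\<dots> \<le> Max (range (Qstar p R \<gamma> s'))"
      using pol' by (intro weighted_sum_le_Max_range) (auto simp: is_policy_def)
    moreover have "(\<Sum>a'\<in>UNIV. \<pi> s' a' * Qstar p R \<gamma> s' a') - D
        = (\<Sum>a'\<in>UNIV. \<pi> s' a' * (Qstar p R \<gamma> s' a' - D))"
      using pol by (simp add: is_policy_def sum_subtractf right_diff_distrib flip: sum_distrib_right)
    moreover have "\<dots> \<le> (\<Sum>a'\<in>UNIV. \<pi> s' a' * Qfun p R \<gamma> \<pi> s' a')"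
      using pol D by (intro sum_mono mult_left_mono) (auto simp: is_policy_def)
    ultimately show ?thesis using C[of s'] by linarith
  qed
  have Qstar_le_Qfun: "Qstar p R \<gamma> s a \<le> Qfun p R \<gamma> \<pi> s a + \<gamma> * (C + D)" for s a
  proof (rule Qstar_le)
    fix pol :: "'s \<Rightarrow> 'a \<Rightarrow> real" assume pol': "is_policy pol"
    have "Qfun p R \<gamma> pol s a - Qfun p R \<gamma> \<pi> s a
        = \<gamma> * (\<Sum>s'\<in>UNIV. p s a s' * ((\<Sum>a'\<in>UNIV. pol s' a' * Qfun p R \<gamma> pol s' a')
                                       - (\<Sum>a'\<in>UNIV. \<pi> s' a' * Qfun p R \<gamma> \<pi> s' a')))"
      by (simp add: Qfun_bellman[OF pol', of s a] Qfun_bellman[OF pol, of s a]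
          right_diff_distrib sum_subtractf)
    also have "\<dots> \<le> \<gamma> * (\<Sum>s'\<in>UNIV. p s a s' * (C + D))"
      using one_step_gain[OF pol'] kernel discount
      by (intro mult_left_mono sum_mono) (auto simp: is_kernel_def)
    also have "\<dots> = \<gamma> * (C + D)"
      using kernel by (simp add: is_kernel_def flip: sum_distrib_right)
    finally show "Qfun p R \<gamma> pol s a \<le> Qfun p R \<gamma> \<pi> s a + \<gamma> * (C + D)" by simp
  qed
  have "supnorm (\<lambda>s a. Qfun p R \<gamma> \<pi> s a - Qstar p R \<gamma> s a) \<le> \<gamma> * (C + D)"
  proof (rule supnorm_le)
    fix s a
    show "\<bar>Qfun p R \<gamma> \<pi> s a - Qstar p R \<gamma> s a\<bar> \<le> \<gamma> * (C + D)"
      using Qstar_le_Qfun[of s a] Qfun_le_Qstar[OF pol, of s a] by (simp add: abs_le_iff)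
  qed
  then have "D * (1 - \<gamma>) \<le> \<gamma> * C"
    unfolding D_def[symmetric] by (simp add: algebra_simps)
  then show ?thesis
    unfolding D_def[symmetric] using discount by (simp add: pos_le_divide_eq)
qed

lemma supnorm_softpol_Qfun_sub_Qstar_le:
  assumes "0 \<le> \<epsilon>" "\<epsilon> \<le> 1" "0 < \<tau>"
  shows "supnorm (\<lambda>s a. Qfun p R \<gamma> (softpol \<epsilon> \<tau> Q) s a - Qstar p R \<gamma> s a)
    \<le> \<gamma> / (1 - \<gamma>) * (2 * \<epsilon> / (1 - \<gamma>) + 2 * supnorm (\<lambda>s a. Q s a - Qstar p R \<gamma> s a)
                      + \<tau> * ln (real CARD('a)))"
  using supnorm_Qfun_sub_Qstar_le[OF softpol_is_policy
      Max_sub_softpol_avg_le[OF abs_Qstar_le assms(1,2,3)]] assms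
  by (simp add: mult.commute)

lemma supnorm_softpol_Qfun_sub_Qstar_sq_le:
  assumes "0 \<le> \<epsilon>" "\<epsilon> \<le> 1" "0 < \<tau>"
  shows "(supnorm (\<lambda>s a. Qfun p R \<gamma> (softpol \<epsilon> \<tau> Q) s a - Qstar p R \<gamma> s a))\<^sup>2
    \<le> 12 * \<gamma>\<^sup>2 / (1 - \<gamma>)\<^sup>2 * (supnorm (\<lambda>s a. Q s a - Qstar p R \<gamma> s a))\<^sup>2
      + 12 * \<epsilon>\<^sup>2 / (1 - \<gamma>) ^ 4
      + 3 * \<tau>\<^sup>2 * (ln (real CARD('a)))\<^sup>2 / (1 - \<gamma>)\<^sup>2"
proof -
  define D where "D = supnorm (\<lambda>s a. Qfun p R \<gamma> (softpol \<epsilon> \<tau> Q) s a - Qstar p R \<gamma> s a)"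
  define E where "E = supnorm (\<lambda>s a. Q s a - Qstar p R \<gamma> s a)"
  define L where "L = \<tau> * ln (real CARD('a))"
  define K where "K = 1 / (1 - \<gamma>)"
  have "D \<le> \<gamma> * K * (2 * \<epsilon> * K + 2 * E + L)"
    using supnorm_softpol_Qfun_sub_Qstar_le[OF assms, of Q]
    by (simp add: D_def E_def L_def K_def)
  then have "D\<^sup>2 \<le> (\<gamma> * K)\<^sup>2 * (2 * \<epsilon> * K + 2 * E + L)\<^sup>2"
    using supnorm_nonneg[of "\<lambda>s a. Qfun p R \<gamma> (softpol \<epsilon> \<tau> Q) s a - Qstar p R \<gamma> s a"]
    by (simp add: D_def power_mono flip: power_mult_distrib)
  also have "\<dots> \<le> (\<gamma> * K)\<^sup>2 * (3 * ((2 * \<epsilon> * K)\<^sup>2 + (2 * E)\<^sup>2 + L\<^sup>2))"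
    by (intro mult_left_mono power2_sum3_le) simp
  also have "\<dots> = \<gamma>\<^sup>2 * (12 * K\<^sup>2 * E\<^sup>2) + \<gamma>\<^sup>2 * (12 * \<epsilon>\<^sup>2 * K ^ 4 + 3 * K\<^sup>2 * L\<^sup>2)"
    by algebra
  also have "\<dots> \<le> \<gamma>\<^sup>2 * (12 * K\<^sup>2 * E\<^sup>2) + (12 * \<epsilon>\<^sup>2 * K ^ 4 + 3 * K\<^sup>2 * L\<^sup>2)"
    using discount by (intro add_left_mono mult_left_le_one_le) (auto simp: power_le_one)
  finally show ?thesis
    by (simp add: D_def E_def L_def K_def power_divide power_mult_distrib add.assoc mult_ac)
qed

end

lemma abs_qupdate_le:
  fixes Q :: "'s::finite \<Rightarrow> 'a::finite \<Rightarrow> real"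
  assumes Q: "\<And>s a. \<bar>Q s a\<bar> \<le> b" and R: "\<And>s a. \<bar>R s a\<bar> \<le> 1"
    and \<alpha>: "0 \<le> \<alpha>" and \<gamma>: "0 \<le> \<gamma>" "\<gamma> \<le> 1"
  shows "\<bar>qupdate \<alpha> R \<gamma> Q s a s' x y\<bar> \<le> (1 + 2 * \<alpha>) * b + \<alpha>"
proof (cases "(x, y) = (s, a)")
  case True
  obtain a' where "Max (range (Q s')) = Q s' a'" using Max_range_attained by blast
  then have "\<bar>\<gamma> * Max (range (Q s'))\<bar> \<le> \<bar>Q s' a'\<bar>"
    using \<gamma> by (simp add: abs_mult mult_left_le_one_le)
  then have "\<bar>\<alpha> * (\<gamma> * Max (range (Q s')))\<bar> \<le> \<alpha> * b"
    using Q[of s' a'] \<alpha> by (simp add: abs_mult mult_left_mono)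
  moreover have "\<bar>\<alpha> * R s a\<bar> \<le> \<alpha>"
    using R[of s a] \<alpha> by (simp add: abs_mult mult_left_le)
  moreover have "\<bar>(1 - \<alpha>) * Q s a\<bar> \<le> (1 + \<alpha>) * b"
    using Q[of s a] \<alpha> by (simp add: abs_mult mult_mono)
  ultimately have "\<bar>(1 - \<alpha>) * Q s a + \<alpha> * R s a + \<alpha> * (\<gamma> * Max (range (Q s')))\<bar>
      \<le> (1 + 2 * \<alpha>) * b + \<alpha>"
    using abs_triangle_ineq[of "(1 - \<alpha>) * Q s a + \<alpha> * R s a" "\<alpha> * (\<gamma> * Max (range (Q s')))"]
      abs_triangle_ineq[of "(1 - \<alpha>) * Q s a" "\<alpha> * R s a"]
    by (simp add: algebra_simps)
  then show ?thesis
    using True by (simp add: qupdate_def algebra_simps)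
next
  case False
  then have "qupdate \<alpha> R \<gamma> Q s a s' x y = Q x y"
    unfolding qupdate_def by presburger
  moreover have "b \<le> (1 + 2 * \<alpha>) * b + \<alpha>"
    using Q[of x y] \<alpha> by (simp add: distrib_right)
  ultimately show ?thesis
    using Q[of x y] by linarith
qed

lemma Q_learning_iterates_bounded:
  assumes Q_init: "\<And>w. w \<in> space M \<Longrightarrow> Q 0 w = Q0"
    and Q_step: "\<And>n w. w \<in> space M \<Longrightarrow>
      Q (Suc n) w = qupdate \<alpha> R \<gamma> (Q n w) (S n w) (A n w) (S (Suc n) w)"
    and R: "\<And>s a. \<bar>R s a\<bar> \<le> 1" and \<alpha>: "0 \<le> \<alpha>" and \<gamma>: "0 \<le> \<gamma>" "\<gamma> \<le> 1"
  shows "\<exists>B. \<forall>w\<in>space M. supnorm (Q n w) \<le> B"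
proof (induction n)
  case 0
  show ?case using Q_init by (intro exI[of _ "supnorm Q0"]) simp
next
  case (Suc n)
  then obtain B where B: "\<forall>w\<in>space M. supnorm (Q n w) \<le> B" by blast
  have "supnorm (Q (Suc n) w) \<le> (1 + 2 * \<alpha>) * B + \<alpha>" if "w \<in> space M" for w
    unfolding Q_step[OF that]
    using B that order_trans[OF supnorm_ge] by (intro supnorm_le abs_qupdate_le R \<alpha> \<gamma>) blast
  then show ?case by blast
qed

lemma Q_learning_iterates_measurable:
  assumes S: "\<And>n. S n \<in> M \<rightarrow>\<^sub>M count_space UNIV" and A: "\<And>n. A n \<in> M \<rightarrow>\<^sub>M count_space UNIV"
    and Q_init: "\<And>w. w \<in> space M \<Longrightarrow> Q 0 w = Q0"
    and Q_step: "\<And>n w. w \<in> space M \<Longrightarrow>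
      Q (Suc n) w = qupdate \<alpha> R \<gamma> (Q n w) (S n w) (A n w) (S (Suc n) w)"
  shows "(\<lambda>w. Q n w s a) \<in> borel_measurable M"
proof (induction n arbitrary: s a)
  case 0
  show ?case using Q_init by (subst measurable_cong[where g="\<lambda>_. Q0 s a"]) auto
next
  case (Suc n)
  note [measurable] = Suc S A
  have [measurable]: "(\<lambda>w. Max (range (Q n w (S (Suc n) w)))) \<in> borel_measurable M"
    by (rule measurable_compose_countable[where f="\<lambda>s' w. Max (range (Q n w s'))"])
      (auto intro!: borel_measurable_Max Suc S)
  have "(\<lambda>w. if S n w = s \<and> A n w = a
      then Q n w s a + \<alpha> * (R s a + \<gamma> * Max (range (Q n w (S (Suc n) w))) - Q n w s a)
      else Q n w s a) \<in> borel_measurable M"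
    by measurable
  then show ?case
    by (subst measurable_cong) (use Q_step in \<open>auto simp: qupdate_def\<close>)
qed

lemma (in prob_space) integral_le_affine_bound:
  fixes f g :: "'a \<Rightarrow> real"
  assumes g: "integrable M g" and g_nonneg: "\<And>x. 0 \<le> g x"
    and c: "0 \<le> c" and d: "0 \<le> d" and f: "\<And>x. f x \<le> c * g x + d"
  shows "integral\<^sup>L M f \<le> c * integral\<^sup>L M g + d"
proof (cases "integrable M f")
  case True
  have "integral\<^sup>L M f \<le> integral\<^sup>L M (\<lambda>x. c * g x + d)"
    using True g f by (intro integral_mono) auto
  also have "\<dots> = c * integral\<^sup>L M g + d"
    using g by (simp add: prob_space)
  finally show ?thesis .
next
  case False
  have "0 \<le> integral\<^sup>L M g"
    using g_nonneg by (simp add: integral_nonneg_AE)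
  then show ?thesis
    using False c d by (simp add: not_integrable_integral_eq)
qed

theorem theorem2:
  fixes M :: "'w measure"
    and p :: "'s::finite \<Rightarrow> 'a::finite \<Rightarrow> 's \<Rightarrow> real"
    and R :: "'s \<Rightarrow> 'a \<Rightarrow> real"
    and \<gamma> \<alpha> \<epsilon> \<tau> :: real
    and Q0 :: "'s \<Rightarrow> 'a \<Rightarrow> real" and s0 :: 's
    and S :: "nat \<Rightarrow> 'w \<Rightarrow> 's" and A :: "nat \<Rightarrow> 'w \<Rightarrow> 'a"
    and Q :: "nat \<Rightarrow> 'w \<Rightarrow> ('s \<Rightarrow> 'a \<Rightarrow> real)"
    and \<pi>b :: "'s \<Rightarrow> 'a \<Rightarrow> real" and \<mu> :: "'s \<Rightarrow> real"
    and rb :: nat and \<delta>b :: real and k :: nat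
  assumes kernel: "is_kernel p"
    and rew: "\<forall>s a. \<bar>R s a\<bar> \<le> 1"
    and gamma: "0 < \<gamma>" "\<gamma> < 1"
    and alpha_pos: "0 < \<alpha>"
    and eps: "0 < \<epsilon>" "\<epsilon> \<le> 1"
    and tau: "0 < \<tau>" "\<tau> \<le> 1 / (1 - \<gamma>)"
    and Q0_bound: "supnorm Q0 \<le> 1 / (1 - \<gamma>)"
    (* exploration assumption *)
    and pib_pol: "is_policy \<pi>b" and pib_pos: "\<forall>s a. 0 < \<pi>b s a"
    and irred: "\<forall>s s'. \<exists>n. 0 < kpow (Pstate p \<pi>b) n s s'"
    and mu_dist: "\<forall>s. 0 \<le> \<mu> s" "(\<Sum>s\<in>UNIV. \<mu> s) = 1"
    and mu_stat: "\<forall>s'. (\<Sum>s\<in>UNIV. \<mu> s * Pstate p \<pi>b s s') = \<mu> s'"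
    and rb_pos: "0 < rb" and deltab: "0 < \<delta>b"
    and mix: "\<forall>s s'. \<delta>b \<le> kpow (\<lambda>x y. (Pstate p \<pi>b x y + (if x = y then 1 else 0)) / 2) rb s s'"
    (* the algorithm, as a stochastic process on M *)
    and prob: "prob_space M"
    and S_meas: "\<forall>n. S n \<in> M \<rightarrow>\<^sub>M count_space UNIV"
    and A_meas: "\<forall>n. A n \<in> M \<rightarrow>\<^sub>M count_space UNIV"
    and S_init: "\<forall>w\<in>space M. S 0 w = s0"
    and Q_init: "\<forall>w\<in>space M. Q 0 w = Q0"
    and Q_step: "\<forall>n. \<forall>w\<in>space M.
        Q (Suc n) w = qupdate \<alpha> R \<gamma> (Q n w) (S n w) (A n w) (S (Suc n) w)"
    and A_law: "\<forall>n H a. measure M {w\<in>space M. histS S A n w \<in> H \<and> A n w = a}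
        = integral\<^sup>L M (\<lambda>w. indicator {w. histS S A n w \<in> H} w
                             * softpol \<epsilon> \<tau> (Q n w) (S n w) a)"
    and S_law: "\<forall>n H s'. measure M {w\<in>space M. histA S A n w \<in> H \<and> S (Suc n) w = s'}
        = integral\<^sup>L M (\<lambda>w. indicator {w. histA S A n w \<in> H} w
                             * p (S n w) (A n w) s')"
    (* step-size condition alpha < 1/c_1, with lambda = min_{n\<le>k} min_{s,a} pi_n(a|s) *)
    and alpha_small: "AE w in M. \<alpha> < 1 / ((1/2)
        * (Min ((\<lambda>(n, s, a). softpol \<epsilon> \<tau> (Q n w) s a) ` ({..k} \<times> UNIV \<times> UNIV))) ^ rb
        * Min (range \<mu>) * \<delta>b * (1 - \<gamma>))"
  shows "integral\<^sup>L M (\<lambda>w. (supnorm (\<lambda>s a. Qfun p R \<gamma> (softpol \<epsilon> \<tau> (Q k w)) s a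
                                          - Qstar p R \<gamma> s a))\<^sup>2)
    \<le> 12 * \<gamma>\<^sup>2 / (1 - \<gamma>)\<^sup>2
        * integral\<^sup>L M (\<lambda>w. (supnorm (\<lambda>s a. Q k w s a - Qstar p R \<gamma> s a))\<^sup>2)
      + 12 * \<epsilon>\<^sup>2 / (1 - \<gamma>) ^ 4
      + 3 * \<tau>\<^sup>2 * (ln (real CARD('a)))\<^sup>2 / (1 - \<gamma>)\<^sup>2"
proof -
  interpret discounted_mdp p R \<gamma>
    using kernel rew gamma by unfold_locales auto
  interpret prob_space M by (rule prob)
  have Q_init: "\<And>w. w \<in> space M \<Longrightarrow> Q 0 w = Q0"
    and Q_step: "\<And>n w. w \<in> space M \<Longrightarrow>
      Q (Suc n) w = qupdate \<alpha> R \<gamma> (Q n w) (S n w) (A n w) (S (Suc n) w)"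
    using Q_init Q_step by auto
  obtain B where B: "\<forall>w\<in>space M. supnorm (Q k w) \<le> B"
    using Q_learning_iterates_bounded[where M=M and Q=Q, OF Q_init Q_step] rew alpha_pos gamma
    by fastforce
  have "supnorm (\<lambda>s a. Q k w s a - Qstar p R \<gamma> s a) \<le> B + 1 / (1 - \<gamma>)" if "w \<in> space M" for w
    using supnorm_diff_le[of "Q k w" "Qstar p R \<gamma>"] supnorm_Qstar_le bspec[OF B that] by linarith
  then have "integrable M (\<lambda>w. (supnorm (\<lambda>s a. Q k w s a - Qstar p R \<gamma> s a))\<^sup>2)"
    using Q_learning_iterates_measurable[where M=M and Q=Q, OF _ _ Q_init Q_step] S_meas A_meas
    by (intro integrable_supnorm_sq borel_measurable_diff) auto
  then show ?thesis
    unfolding add.assoc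
    by (rule integral_le_affine_bound)
      (use supnorm_softpol_Qfun_sub_Qstar_sq_le eps tau gamma in \<open>auto simp: add.assoc\<close>)
qed

end
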